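(* Let $p,q\ge 2$. (i) If $M_1, M_2 \subset \widetilde{\mathrm{Ein}}^{p,q}$ are two Minkowski patches, then $\pi_{\mathbf{X}}(M_1 \cap \iota(M_2))$ is the complement of $\pi_{\mathbf{X}}(M_1 \cap M_2)$ in $\pi_{\mathbf{X}}(M_1) \cap \pi_{\mathbf{X}}(M_2)$. (ii) If $M_1, M_2, M_3 \subset \widetilde{\mathrm{Ein}}^{p,q}$ are three Minkowski patches with $M_1 \cap M_3 = M_2 \cap M_3$, then $M_1 = M_2$.
   Context: $\widetilde{\mathrm{Ein}}^{p,q}\cong\mathbb{S}^p\times\mathbb{S}^q$ is the set of isotropic vectors of Euclidean norm $1$ in $\mathbb{R}^{p+1,q+1}$, $\pi_{\mathbf{X}}$ its double cover onto $\mathrm{Ein}^{p,q}$ (isotropic lines, with induced conformal structure), and $\iota$ the product of antipodal maps. Minkowski patches of $\mathrm{Ein}^{p,q}$ are $M_x=\{[w]:B(v,w)\neq0\}$ for $x=[v]$ isotropic; those of $\widetilde{\mathrm{Ein}}^{p,q}$ are the connected components of $\pi_{\mathbf{X}}^{-1}(M_x)$. *)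

theory Defs
  imports "HOL-Analysis.Analysis"
begin

text \<open>R^{p+1,q+1} is modelled as 'a \<times> 'b with DIM('a) = p+1, DIM('b) = q+1,
  equipped with the bilinear form of signature (p+1,q+1).\<close>

definition B :: "('a::euclidean_space \<times> 'b::euclidean_space) \<Rightarrow> ('a \<times> 'b) \<Rightarrow> real" where
  "B v w = fst v \<bullet> fst w - snd v \<bullet> snd w"

definition EinT :: "('a::euclidean_space \<times> 'b::euclidean_space) set" where
  "EinT = {v. B v v = 0 \<and> norm v = 1}"

text \<open>A point of Ein (an isotropic line) is represented as the line itself.\<close>
definition piX :: "('a::euclidean_space \<times> 'b::euclidean_space) \<Rightarrow> ('a \<times> 'b) set" where
  "piX v = {t *\<^sub>R v | t. True}"

text \<open>Product of the antipodal maps.\<close>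
definition iota :: "('a::euclidean_space \<times> 'b::euclidean_space) \<Rightarrow> ('a \<times> 'b)" where
  "iota v = - v"

text \<open>Preimage in Ein-tilde of the Minkowski patch M_x, x = [v].\<close>
definition preM :: "('a::euclidean_space \<times> 'b::euclidean_space) \<Rightarrow> ('a \<times> 'b) set" where
  "preM v = {w \<in> EinT. B v w \<noteq> 0}"

definition mink_patch :: "('a::euclidean_space \<times> 'b::euclidean_space) set \<Rightarrow> bool" where
  "mink_patch M \<longleftrightarrow> (\<exists>v w. v \<noteq> 0 \<and> B v v = 0 \<and> w \<in> preM v \<and>
       M = connected_component_set (preM v) w)"

end

theory Submission
  imports Defs
begin

text \<open>
  Write \<open>B(v, (a, b)) = s (x \<bullet> a + y \<bullet> b)\<close> with \<open>s > 0\<close> and unit vectors \<open>x, y\<close>, and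
  \<open>Ein~ = S \<times> S\<close> with spheres of radius \<open>1/\<surd>2\<close>. The set \<open>{B(v, -) > 0}\<close> is the union, over
  \<open>t\<close>, of the products of the caps \<open>x \<bullet> a > t\<close> and \<open>y \<bullet> b > -t\<close>; all of them contain
  \<open>(x, y) / \<surd>2\<close>, so it is connected. As \<open>B(v, -)\<close> cannot change sign on a connected subset of
  \<open>{B(v, -) \<noteq> 0}\<close>, the Minkowski patches are exactly the sets \<open>{B(v, -) > 0}\<close>.

  (i) The fibres of \<open>Ein~ \<rightarrow> Ein\<close> are the pairs \<open>{w, -w}\<close>, and \<open>-w = \<iota> w\<close>: a line meets
  \<open>M1\<close> and \<open>M2\<close> but not \<open>M1 \<inter> M2\<close> iff one of its points lies in \<open>M1\<close> and the other in \<open>M2\<close>.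

  (ii) Fix \<open>b\<close> orthogonal to \<open>y1, y2\<close> (possible as \<open>q + 1 \<ge> 3\<close>) with \<open>y3 \<bullet> b \<ge> 0\<close>. Then
  \<open>M1 \<inter> M3 = M2 \<inter> M3\<close> says that \<open>x1 \<bullet> a\<close> and \<open>x2 \<bullet> a\<close> have the same sign on the half-space
  \<open>x3 \<bullet> a > 0\<close>, which forces \<open>x1 = x2\<close>; symmetrically \<open>y1 = y2\<close>.
\<close>

text \<open>The point where the ray from \<open>p\<close> through \<open>z\<close> leaves the sphere of radius \<open>R > norm p\<close>:
  \<open>p + t (z - p)\<close> with \<open>t\<close> the positive root of \<open>norm (p + t (z - p))\<^sup>2 = R\<^sup>2\<close>.\<close>

definition radial_proj :: "'a::real_inner \<Rightarrow> real \<Rightarrow> 'a \<Rightarrow> 'a" where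
  "radial_proj p R z =
     p + ((sqrt ((p \<bullet> (z - p))\<^sup>2 + ((z - p) \<bullet> (z - p)) * (R\<^sup>2 - p \<bullet> p)) - p \<bullet> (z - p))
           / ((z - p) \<bullet> (z - p))) *\<^sub>R (z - p)"

lemma radial_proj_ray_sphere:
  fixes p z :: "'a::real_inner"
  assumes "norm p < R" and "z \<noteq> p"
  obtains t where "t > 0" "radial_proj p R z = p + t *\<^sub>R (z - p)" "norm (radial_proj p R z) = R"
proof -
  define u where "u = z - p"
  define k where "k = p \<bullet> u"
  define m where "m = u \<bullet> u"
  define D where "D = k\<^sup>2 + m * (R\<^sup>2 - p \<bullet> p)"
  define s where "s = sqrt D"
  define t where "t = (s - k) / m"
  have R: "R > 0" using assms(1) norm_ge_zero[of p] by linarith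
  have m: "m > 0" using assms(2) by (simp add: m_def u_def)
  have "p \<bullet> p < R\<^sup>2"
    using assms(1) by (metis R dot_square_norm norm_ge_zero power_strict_mono zero_less_numeral)
  hence D: "D > k\<^sup>2" using m by (simp add: D_def)
  hence s2: "s\<^sup>2 = D" by (simp add: s_def) (smt (verit) zero_le_power2)
  have "s > \<bar>k\<bar>" using D unfolding s_def by (metis real_sqrt_abs real_sqrt_less_mono)
  hence t: "t > 0" using m by (simp add: t_def)
  have proj: "radial_proj p R z = p + t *\<^sub>R u"
    by (simp add: radial_proj_def t_def s_def D_def k_def m_def u_def)
  have "radial_proj p R z \<bullet> radial_proj p R z = p \<bullet> p + t * (2 * k + t * m)"
    by (simp add: proj inner_add_left inner_add_right k_def m_def inner_commute algebra_simps)
  also have "t * (2 * k + t * m) = (s - k) * (s + k) / m"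
    using m by (simp add: t_def field_simps)
  also have "\<dots> = R\<^sup>2 - p \<bullet> p"
    using m s2 by (simp add: D_def power2_eq_square field_simps)
  finally have "norm (radial_proj p R z) = R"
    using R by (simp add: norm_eq_sqrt_inner)
  with t proj show ?thesis using that by (simp add: u_def)
qed

lemma radial_proj_on_sphere:
  fixes p z :: "'a::real_inner"
  assumes "norm p < R" and "norm z = R"
  shows "radial_proj p R z = z"
proof -
  define u where "u = z - p"
  define k where "k = p \<bullet> u"
  define m where "m = u \<bullet> u"
  have "z \<noteq> p" using assms by auto
  hence m: "m > 0" by (simp add: m_def u_def)
  have R: "R > 0" using assms(1) norm_ge_zero[of p] by linarith
  have zz: "z \<bullet> z = R\<^sup>2" using assms(2) by (simp add: dot_square_norm)
  have "p \<bullet> z \<le> norm p * norm z" by (rule norm_cauchy_schwarz)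
  also have "\<dots> < R * R"
    using assms R by (simp add: mult_strict_right_mono)
  finally have "m + k > 0"
    using zz by (simp add: m_def k_def u_def inner_diff_left inner_diff_right inner_commute
        power2_eq_square)
  moreover have "k\<^sup>2 + m * (R\<^sup>2 - p \<bullet> p) = (m + k)\<^sup>2"
    using zz by (simp add: m_def k_def u_def inner_diff_left inner_diff_right inner_commute
        power2_eq_square algebra_simps)
  ultimately show ?thesis
    using m by (simp add: radial_proj_def flip: k_def m_def u_def) (simp add: u_def)
qed

lemma continuous_on_radial_proj: "continuous_on (- {p}) (radial_proj p R)"
  unfolding radial_proj_def by (intro continuous_intros) auto

lemma connected_sphere_cap:
  fixes n :: "'a::real_inner"
  assumes "norm n = 1" and "\<bar>c\<bar> < R"
  shows "connected {q. norm q = R \<and> n \<bullet> q > c}"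
proof -
  define p where "p = c *\<^sub>R n"
  define H where "H = {z. n \<bullet> z > c}"
  have np: "n \<bullet> p = c" and p: "norm p < R"
    using assms by (simp_all add: p_def dot_square_norm)
  have "p \<notin> H" by (simp add: H_def np)
  hence "connected (radial_proj p R ` H)"
    by (intro connected_continuous_image continuous_on_subset[OF continuous_on_radial_proj])
      (auto simp: H_def convex_connected convex_halfspace_gt)
  moreover have "radial_proj p R ` H = {q. norm q = R \<and> n \<bullet> q > c}"
  proof
    show "radial_proj p R ` H \<subseteq> {q. norm q = R \<and> n \<bullet> q > c}"
    proof clarify
      fix z assume "z \<in> H"
      hence z: "n \<bullet> z > c" "z \<noteq> p" using \<open>p \<notin> H\<close> by (auto simp: H_def)
      obtain t where "t > 0" "radial_proj p R z = p + t *\<^sub>R (z - p)"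
        "norm (radial_proj p R z) = R"
        using radial_proj_ray_sphere[OF p z(2)] .
      thus "norm (radial_proj p R z) = R \<and> n \<bullet> radial_proj p R z > c"
        using z np by (simp add: inner_add_right inner_diff_right)
    qed
    show "{q. norm q = R \<and> n \<bullet> q > c} \<subseteq> radial_proj p R ` H"
      using radial_proj_on_sphere[OF p] by (force simp: H_def)
  qed
  ultimately show ?thesis by simp
qed

definition sphere_prod_halfspace :: "real \<Rightarrow> 'a::real_inner \<Rightarrow> 'b::real_inner \<Rightarrow> ('a \<times> 'b) set" where
  "sphere_prod_halfspace r x y = {(a, b). norm a = r \<and> norm b = r \<and> x \<bullet> a + y \<bullet> b > 0}"

lemma connected_sphere_prod_halfspace:
  fixes x :: "'a::real_inner" and y :: "'b::real_inner"
  assumes "r > 0" and "norm x = 1" and "norm y = 1"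
  shows "connected (sphere_prod_halfspace r x y)"
proof -
  define capx where "capx t = {a. norm a = r \<and> x \<bullet> a > t}" for t
  define capy where "capy t = {b. norm b = r \<and> y \<bullet> b > t}" for t
  \<comment> \<open>Slice along the value of \<open>(x \<bullet> a - y \<bullet> b) / 2\<close>; all slices contain \<open>(r x, r y)\<close>.\<close>
  have slices: "sphere_prod_halfspace r x y = (\<Union>t\<in>{-r<..<r}. capx t \<times> capy (- t))"
  proof (intro set_eqI iffI)
    fix w assume "w \<in> sphere_prod_halfspace r x y"
    then obtain a b where w: "w = (a, b)" and ab: "norm a = r" "norm b = r" "x \<bullet> a + y \<bullet> b > 0"
      by (auto simp: sphere_prod_halfspace_def)
    have "x \<bullet> a \<le> r" "y \<bullet> b \<le> r"
      using norm_cauchy_schwarz[of x a] norm_cauchy_schwarz[of y b] assms ab by simp_all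
    with ab show "w \<in> (\<Union>t\<in>{-r<..<r}. capx t \<times> capy (- t))"
      by (intro UN_I[of "(x \<bullet> a - y \<bullet> b) / 2"]) (auto simp: w capx_def capy_def field_simps)
  qed (auto simp: sphere_prod_halfspace_def capx_def capy_def)
  show ?thesis unfolding slices
  proof (rule connected_Union)
    show "\<Inter> ((\<lambda>t. capx t \<times> capy (- t)) ` {-r<..<r}) \<noteq> {}"
      using assms by (intro ex_in_conv[THEN iffD1] exI[of _ "(r *\<^sub>R x, r *\<^sub>R y)"])
        (auto simp: capx_def capy_def dot_square_norm)
  qed (use assms in \<open>auto intro!: connected_Times simp: capx_def capy_def connected_sphere_cap\<close>)
qed

lemma B_eq_inner: "B v w = (fst v, - snd v) \<bullet> w"
  by (simp add: B_def inner_prod_def)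

lemma B_uminus [simp]: "B v (- w) = - B v w" "B (- v) w = - B v w"
  by (simp_all add: B_def)

definition ein_radius :: real where
  "ein_radius = sqrt (1 / 2)"

lemma EinT_iff: "(a, b) \<in> EinT \<longleftrightarrow> norm a = ein_radius \<and> norm b = ein_radius"
proof -
  have "(a, b) \<in> EinT \<longleftrightarrow> (norm a)\<^sup>2 = (norm b)\<^sup>2 \<and> (norm a)\<^sup>2 + (norm b)\<^sup>2 = 1"
    by (simp add: EinT_def B_def norm_Pair dot_square_norm)
  also have "\<dots> \<longleftrightarrow> (norm a)\<^sup>2 = 1 / 2 \<and> (norm b)\<^sup>2 = 1 / 2"
    by (metis (no_types) field_sum_of_halves mult_2[symmetric] nonzero_mult_div_cancel_left
        zero_neq_numeral)
  also have "\<dots> \<longleftrightarrow> norm a = ein_radius \<and> norm b = ein_radius"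
    by (metis ein_radius_def norm_ge_zero real_sqrt_unique real_sqrt_ge_zero real_sqrt_pow2
        zero_le_divide_1_iff zero_le_numeral)
  finally show ?thesis .
qed

lemma uminus_in_EinT_iff [simp]: "- w \<in> EinT \<longleftrightarrow> w \<in> EinT"
  by (simp add: EinT_def B_def)

definition pos_patch :: "('a::euclidean_space \<times> 'b::euclidean_space) \<Rightarrow> ('a \<times> 'b) set" where
  "pos_patch v = {w \<in> EinT. B v w > 0}"

lemma pos_patch_eq_sphere_prod_halfspace:
  fixes v :: "'a::euclidean_space \<times> 'b::euclidean_space"
  assumes "v \<noteq> 0" and "B v v = 0"
  obtains x y where "norm x = 1" "norm y = 1" "pos_patch v = sphere_prod_halfspace ein_radius x y"
proof -
  obtain x0 y0 where v: "v = (x0, y0)" by (cases v)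
  define s where "s = norm x0"
  have "norm x0 = norm y0"
    using assms(2) by (simp add: v B_def norm_eq_sqrt_inner)
  hence s: "s > 0" "norm y0 = s" using assms(1) by (auto simp: s_def v zero_prod_def)
  define x where "x = x0 /\<^sub>R s"
  define y where "y = - (y0 /\<^sub>R s)"
  have "B v (a, b) = s * (x \<bullet> a + y \<bullet> b)" for a b
    using s by (simp add: v B_def x_def y_def algebra_simps mult.assoc[symmetric])
  hence "pos_patch v = sphere_prod_halfspace ein_radius x y"
    using s by (auto simp: pos_patch_def sphere_prod_halfspace_def EinT_iff zero_less_mult_iff)
  moreover have "norm x = 1" "norm y = 1" using s by (simp_all add: x_def y_def s_def)
  ultimately show ?thesis using that by blast
qed

lemma connected_component_preM:
  fixes v :: "'a::euclidean_space \<times> 'b::euclidean_space"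
  assumes "v \<noteq> 0" and "B v v = 0" and w: "w \<in> pos_patch v"
  shows "connected_component_set (preM v) w = pos_patch v"
proof
  have sub: "pos_patch v \<subseteq> preM v" by (auto simp: pos_patch_def preM_def)
  obtain x y where "norm x = 1" "norm y = 1" "pos_patch v = sphere_prod_halfspace ein_radius x y"
    using pos_patch_eq_sphere_prod_halfspace[OF assms(1,2)] .
  hence "connected (pos_patch v)"
    by (simp add: connected_sphere_prod_halfspace ein_radius_def)
  with sub w show "pos_patch v \<subseteq> connected_component_set (preM v) w"
    by (intro connected_component_maximal) auto
  show "connected_component_set (preM v) w \<subseteq> pos_patch v"
  proof
    fix z assume z: "z \<in> connected_component_set (preM v) w"
    define C where "C = connected_component_set (preM v) w"
    have C: "connected C" "C \<subseteq> preM v" "w \<in> C" "z \<in> C"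
      using w sub z by (auto simp: C_def connected_component_subset)
    show "z \<in> pos_patch v"
    proof (rule ccontr)
      assume "z \<notin> pos_patch v"
      hence "(fst v, - snd v) \<bullet> z \<le> 0" "0 \<le> (fst v, - snd v) \<bullet> w"
        using w C(2,4) by (auto simp: pos_patch_def preM_def B_eq_inner)
      then obtain u where "u \<in> C" "(fst v, - snd v) \<bullet> u = 0"
        using connected_ivt_hyperplane[OF C(1) C(4) C(3)] by blast
      thus False using C(2) by (auto simp: preM_def B_eq_inner)
    qed
  qed
qed

lemma mink_patchE:
  fixes M :: "('a::euclidean_space \<times> 'b::euclidean_space) set"
  assumes "mink_patch M"
  obtains v where "v \<noteq> 0" "B v v = 0" "M = pos_patch v"
proof -
  obtain v w where v: "v \<noteq> 0" "B v v = 0" and w: "w \<in> preM v"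
    and M: "M = connected_component_set (preM v) w"
    using assms unfolding mink_patch_def by blast
  have "preM (- v) = preM v" by (auto simp: preM_def)
  moreover have "w \<in> pos_patch v \<or> w \<in> pos_patch (- v)"
    using w by (auto simp: pos_patch_def preM_def)
  ultimately show ?thesis
    using that connected_component_preM[of v w] connected_component_preM[of "- v" w] v M
    by (metis B_uminus minus_minus neg_equal_0_iff_equal)
qed

lemma piX_uminus [simp]: "piX (- w) = piX w"
  unfolding piX_def by (metis scaleR_minus_left scaleR_minus_right minus_minus)

lemma piX_eq_EinT_iff:
  assumes "w \<in> EinT" and "w' \<in> EinT"
  shows "piX w' = piX w \<longleftrightarrow> w' = w \<or> w' = - w"
proof
  assume "piX w' = piX w"
  moreover have "w' \<in> piX w'" unfolding piX_def by (metis (mono_tags) mem_Collect_eq scaleR_one)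
  ultimately obtain t where t: "w' = t *\<^sub>R w" by (auto simp: piX_def)
  with assms have "\<bar>t\<bar> = 1" by (simp add: EinT_def)
  with t show "w' = w \<or> w' = - w" by (auto simp: abs_if split: if_splits)
qed auto

lemma uminus_in_pos_patch_iff: "- w \<in> pos_patch v \<longleftrightarrow> w \<in> pos_patch (- v)"
  by (simp add: pos_patch_def)

lemma iota_image_pos_patch: "iota ` pos_patch v = pos_patch (- v)"
proof -
  have "w \<in> uminus ` pos_patch v \<longleftrightarrow> - w \<in> pos_patch v" for w
    by (metis image_iff minus_minus)
  thus ?thesis by (auto simp: iota_def uminus_in_pos_patch_iff)
qed

lemma piX_pos_patch_inter_iota:
  "piX ` (pos_patch v1 \<inter> iota ` pos_patch v2) =
     (piX ` pos_patch v1 \<inter> piX ` pos_patch v2) - piX ` (pos_patch v1 \<inter> pos_patch v2)"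
proof (intro set_eqI iffI)
  fix L assume "L \<in> piX ` (pos_patch v1 \<inter> iota ` pos_patch v2)"
  then obtain w where L: "L = piX w" and w: "w \<in> pos_patch v1" "- w \<in> pos_patch v2"
    by (auto simp: iota_image_pos_patch uminus_in_pos_patch_iff)
  have "L \<notin> piX ` (pos_patch v1 \<inter> pos_patch v2)"
  proof
    assume "L \<in> piX ` (pos_patch v1 \<inter> pos_patch v2)"
    then obtain w' where "w' \<in> pos_patch v1" "w' \<in> pos_patch v2" "piX w' = piX w"
      using L by auto
    with w show False using piX_eq_EinT_iff[of w w'] by (auto simp: pos_patch_def)
  qed
  with L w show "L \<in> (piX ` pos_patch v1 \<inter> piX ` pos_patch v2) - piX ` (pos_patch v1 \<inter> pos_patch v2)"
    by (metis DiffI IntI image_eqI piX_uminus)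
next
  fix L assume L: "L \<in> (piX ` pos_patch v1 \<inter> piX ` pos_patch v2) - piX ` (pos_patch v1 \<inter> pos_patch v2)"
  then obtain w1 w2 where w: "w1 \<in> pos_patch v1" "w2 \<in> pos_patch v2" "L = piX w1" "L = piX w2"
    by blast
  with L have "w2 \<noteq> w1" by blast
  with w have "w2 = - w1" using piX_eq_EinT_iff[of w1 w2] by (auto simp: pos_patch_def)
  with w have "w1 \<in> pos_patch v1 \<inter> iota ` pos_patch v2"
    by (simp add: iota_image_pos_patch flip: uminus_in_pos_patch_iff)
  with w show "L \<in> piX ` (pos_patch v1 \<inter> iota ` pos_patch v2)" by blast
qed

lemma unit_vector_eq_if_same_sign_on_halfspace:
  fixes h z1 z2 :: "'a::real_inner"
  assumes "h \<noteq> 0" and z1: "norm z1 = 1" and z2: "norm z2 = 1"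
    and same_sign: "\<And>a. h \<bullet> a > 0 \<Longrightarrow> z1 \<bullet> a > 0 \<longleftrightarrow> z2 \<bullet> a > 0"
  shows "z1 = z2"
proof (rule ccontr)
  assume "z1 \<noteq> z2"
  define d where "d = 1 - z1 \<bullet> z2"
  have zz: "z1 \<bullet> z1 = 1" "z2 \<bullet> z2 = 1" using z1 z2 by (simp_all add: dot_square_norm)
  have "(z1 - z2) \<bullet> (z1 - z2) = 2 * d"
    using zz by (simp add: d_def inner_diff_left inner_diff_right inner_commute)
  moreover have "(z1 - z2) \<bullet> (z1 - z2) > 0" using \<open>z1 \<noteq> z2\<close> by simp
  ultimately have d: "d > 0" by simp
  have z1d: "z1 \<bullet> (z1 - z2) = d" "z1 \<bullet> (z2 - z1) = - d"
    and z2d: "z2 \<bullet> (z1 - z2) = - d" "z2 \<bullet> (z2 - z1) = d"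
    using zz by (simp_all add: d_def inner_diff_right inner_commute)
  \<comment> \<open>Tilt \<open>z1 - z2\<close> or \<open>z2 - z1\<close> slightly towards \<open>h\<close>: this enters the half-space while keeping the
      opposite signs of \<open>z1 \<bullet> a\<close> and \<open>z2 \<bullet> a\<close>.\<close>
  define e where "e = d / (2 * norm h)"
  have e: "e > 0" "e * (h \<bullet> h) > 0" using d assms(1) by (simp_all add: e_def)
  have small: "- (d / 2) \<le> e * (z \<bullet> h) \<and> e * (z \<bullet> h) \<le> d / 2" if "norm z = 1" for z
  proof -
    have "\<bar>z \<bullet> h\<bar> \<le> norm h" using Cauchy_Schwarz_ineq2[of z h] that by simp
    hence "e * \<bar>z \<bullet> h\<bar> \<le> d / 2"
      using e assms(1) mult_left_mono[of "\<bar>z \<bullet> h\<bar>" "norm h" e] by (simp add: e_def)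
    hence "\<bar>e * (z \<bullet> h)\<bar> \<le> d / 2" using e by (simp add: abs_mult)
    thus ?thesis by linarith
  qed
  note z1h = small[OF z1] and z2h = small[OF z2]
  show False
  proof (cases "h \<bullet> (z1 - z2) \<ge> 0")
    case True
    define a where "a = (z1 - z2) + e *\<^sub>R h"
    have "h \<bullet> a > 0" using True e by (simp add: a_def inner_add_right)
    moreover have "z1 \<bullet> a > 0" using z1h d by (simp add: a_def inner_add_right z1d)
    moreover have "\<not> z2 \<bullet> a > 0" using z2h d by (simp add: a_def inner_add_right z2d)
    ultimately show False using same_sign by blast
  next
    case False
    define a where "a = (z2 - z1) + e *\<^sub>R h"
    have "h \<bullet> a > 0" using False e by (simp add: a_def inner_add_right inner_diff_right)
    moreover have "\<not> z1 \<bullet> a > 0" using z1h d by (simp add: a_def inner_add_right z1d)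
    moreover have "z2 \<bullet> a > 0" using z2h d by (simp add: a_def inner_add_right z2d)
    ultimately show False using same_sign by blast
  qed
qed

lemma sphere_prod_halfspace_inter_eq_imp_fst_eq:
  fixes x1 x2 x3 :: "'a::real_inner" and y1 y2 y3 :: "'b::euclidean_space"
  assumes "DIM('b) \<ge> 3" and "r > 0" and "norm x1 = 1" "norm x2 = 1" "x3 \<noteq> 0"
    and eq: "sphere_prod_halfspace r x1 y1 \<inter> sphere_prod_halfspace r x3 y3 =
             sphere_prod_halfspace r x2 y2 \<inter> sphere_prod_halfspace r x3 y3"
  shows "x1 = x2"
proof -
  have "card {y1, y2} \<le> 2" by (cases "y1 = y2") auto
  hence "dim {y1, y2} < DIM('b)" using dim_le_card'[of "{y1, y2}"] assms(1) by simp
  then obtain b0 where "b0 \<noteq> 0" "\<And>y. y \<in> span {y1, y2} \<Longrightarrow> orthogonal b0 y"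
    using orthogonal_to_subspace_exists by blast
  hence b0: "b0 \<noteq> 0" "b0 \<bullet> y1 = 0" "b0 \<bullet> y2 = 0"
    by (auto simp: span_base orthogonal_def)
  \<comment> \<open>Freeze the second factor at a point \<open>b\<close> invisible to \<open>y1, y2\<close> (this needs \<open>dim \<ge> 3\<close>)
      with \<open>y3 \<bullet> b \<ge> 0\<close>.\<close>
  define b where "b = (if y3 \<bullet> b0 \<ge> 0 then r / norm b0 else - r / norm b0) *\<^sub>R b0"
  have b: "norm b = r" "y3 \<bullet> b \<ge> 0" "y1 \<bullet> b = 0" "y2 \<bullet> b = 0"
    using b0 \<open>r > 0\<close> by (auto simp: b_def inner_commute zero_le_mult_iff mult_le_0_iff)
  show ?thesis
  proof (rule unit_vector_eq_if_same_sign_on_halfspace[of x3])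
    fix a assume "x3 \<bullet> a > 0"
    hence "a \<noteq> 0" by auto
    define k where "k = r / norm a"
    have k: "k > 0" "norm (k *\<^sub>R a) = r" using \<open>a \<noteq> 0\<close> \<open>r > 0\<close> by (simp_all add: k_def)
    have "(k *\<^sub>R a, b) \<in> sphere_prod_halfspace r x3 y3"
      using k b \<open>x3 \<bullet> a > 0\<close> by (simp add: sphere_prod_halfspace_def add_pos_nonneg)
    hence "(k *\<^sub>R a, b) \<in> sphere_prod_halfspace r x1 y1 \<longleftrightarrow>
           (k *\<^sub>R a, b) \<in> sphere_prod_halfspace r x2 y2"
      using eq by blast
    thus "x1 \<bullet> a > 0 \<longleftrightarrow> x2 \<bullet> a > 0"
      using k b by (simp add: sphere_prod_halfspace_def zero_less_mult_iff)
  qed (use assms in auto)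
qed

lemma sphere_prod_halfspace_swap:
  fixes x :: "'a::real_inner" and y :: "'b::real_inner"
  shows "sphere_prod_halfspace r y x = prod.swap ` sphere_prod_halfspace r x y"
proof (rule set_eqI)
  fix w :: "'b \<times> 'a"
  show "w \<in> sphere_prod_halfspace r y x \<longleftrightarrow> w \<in> prod.swap ` sphere_prod_halfspace r x y"
    by (cases w) (auto simp: sphere_prod_halfspace_def add.commute)
qed

lemma sphere_prod_halfspace_inter_eq_imp_eq:
  fixes x1 x2 x3 :: "'a::euclidean_space" and y1 y2 y3 :: "'b::euclidean_space"
  assumes "DIM('a) \<ge> 3" "DIM('b) \<ge> 3" and "r > 0"
    and "norm x1 = 1" "norm x2 = 1" "norm x3 = 1" "norm y1 = 1" "norm y2 = 1" "norm y3 = 1"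
    and eq: "sphere_prod_halfspace r x1 y1 \<inter> sphere_prod_halfspace r x3 y3 =
             sphere_prod_halfspace r x2 y2 \<inter> sphere_prod_halfspace r x3 y3"
  shows "x1 = x2" and "y1 = y2"
proof -
  have "x3 \<noteq> 0" "y3 \<noteq> 0" using assms(6,9) by auto
  show "x1 = x2"
    by (rule sphere_prod_halfspace_inter_eq_imp_fst_eq[OF assms(2,3,4,5) \<open>x3 \<noteq> 0\<close> eq])
  have "sphere_prod_halfspace r y1 x1 \<inter> sphere_prod_halfspace r y3 x3 =
        sphere_prod_halfspace r y2 x2 \<inter> sphere_prod_halfspace r y3 x3"
    using eq by (simp add: sphere_prod_halfspace_swap[of r x1 y1] sphere_prod_halfspace_swap[of r x2 y2]
        sphere_prod_halfspace_swap[of r x3 y3] inj_image_eq_iff[OF bij_is_inj[OF bij_swap]]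
        flip: image_Int[OF bij_is_inj[OF bij_swap]])
  thus "y1 = y2"
    by (rule sphere_prod_halfspace_inter_eq_imp_fst_eq[OF assms(1,3,7,8) \<open>y3 \<noteq> 0\<close>])
qed

theorem lemma2p8:
  assumes "DIM('a::euclidean_space) \<ge> 3" and "DIM('b::euclidean_space) \<ge> 3"
  shows "(\<forall>M1 M2 :: ('a \<times> 'b) set. mink_patch M1 \<and> mink_patch M2 \<longrightarrow>
            piX ` (M1 \<inter> iota ` M2) = (piX ` M1 \<inter> piX ` M2) - piX ` (M1 \<inter> M2)) \<and>
         (\<forall>M1 M2 M3 :: ('a \<times> 'b) set. mink_patch M1 \<and> mink_patch M2 \<and> mink_patch M3 \<and>
            M1 \<inter> M3 = M2 \<inter> M3 \<longrightarrow> M1 = M2)"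
proof (intro conjI allI impI; elim conjE)
  fix M1 M2 :: "('a \<times> 'b) set"
  assume "mink_patch M1" "mink_patch M2"
  then obtain v1 v2 where "M1 = pos_patch v1" "M2 = pos_patch v2" by (metis mink_patchE)
  thus "piX ` (M1 \<inter> iota ` M2) = (piX ` M1 \<inter> piX ` M2) - piX ` (M1 \<inter> M2)"
    by (simp add: piX_pos_patch_inter_iota)
next
  fix M1 M2 M3 :: "('a \<times> 'b) set"
  assume "mink_patch M1" "mink_patch M2" "mink_patch M3" and eq: "M1 \<inter> M3 = M2 \<inter> M3"
  have "\<exists>x y. norm x = 1 \<and> norm y = 1 \<and> M = sphere_prod_halfspace ein_radius x y"
    if "mink_patch M" for M :: "('a \<times> 'b) set"
    by (metis that mink_patchE pos_patch_eq_sphere_prod_halfspace)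
  then obtain x1 y1 x2 y2 x3 y3 where
    "norm x1 = 1" "norm y1 = 1" "M1 = sphere_prod_halfspace ein_radius x1 y1"
    "norm x2 = 1" "norm y2 = 1" "M2 = sphere_prod_halfspace ein_radius x2 y2"
    "norm x3 = 1" "norm y3 = 1" "M3 = sphere_prod_halfspace ein_radius x3 y3"
    using \<open>mink_patch M1\<close> \<open>mink_patch M2\<close> \<open>mink_patch M3\<close> by metis
  moreover have "ein_radius > 0" by (simp add: ein_radius_def)
  ultimately show "M1 = M2"
    using sphere_prod_halfspace_inter_eq_imp_eq[OF assms] eq by metis
qed

end
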